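(* Let $Q$ be an operator circuit, let $x$ be an input string, and let $T_Q(G,M)$ be the tensor circuit constructed from $Q$ and $x$ as described in the context. Then the value of $T_Q(G,M)$ equals $\|Q(x)_0\|^2$.
   Context: Let $A=\mathbb{C}^2$ with orthonormal basis $|0\rangle,|1\rangle$. Operator circuits: an operator circuit $Q$ has $n$ input qubits and $m$ output qubits, one of which is marked as the answer qubit. Its gates are arbitrary linear maps $g:A^{\otimes k}\to A^{\otimes\ell}$. For $x\in\{0,1\}^n$, $Q(x)_0$ is the projection of $Q(x)$ onto the subspace in which the answer qubit is $|0\rangle$. Adjoint gate: for a gate $g$, its adjoint $g^*$ is the linear map determined by $\langle y|g^*z\rangle=\langle gy|z\rangle$. The circuit $Q'$: first apply $Q$; then apply to the answer qubit a one-qubit gate that projects onto $|0\rangle$; then apply the circuit $Q$ flipped upside down, with every gate $g$ replaced by $g^*$. So $Q'$ maps $n$ qubits to $n$ qubits. Tensor circuits: for a finite graph $G$, a labeling is a map $l:E(G)\to\{0,1\}$. For a vertex $v$, let $G_v$ be the star of $v$, i.e. the subgraph consisting of $v$, its incident edges and their endpoints. A tensor at $v$ is a map $m_v$ from labelings of the edges of $G_v$ to $\mathbb{C}$. A tensor circuit $(G,M)$ is a graph $G$ with a tensor $m_v$ at every vertex. Its value is $$\sum_{l:E(G)\to\{0,1\}}\ \prod_{v\in V(G)} m_v(l|_{E(G_v)}).$$ For a set $E$ of edges and a labeling $l$, $\alpha^{l(E)}$ denotes the basis vector $\bigotimes_{e\in E}|l(e)\rangle$ of $A^{\otimes E}$.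 Construction of $T_Q(G,M)$: $G$ is the graph of $Q'$. It has one vertex for each gate of $Q'$ (including the projection gate), one degree-1 vertex for each of the $n$ input qubits, one degree-1 vertex for each of the $n$ output qubits, and one edge for each wire. The tensors are as follows. - For a vertex $v$ of a gate $g$ with input-wire edges $E_1$ and output-wire edges $E_2$: $m_v(l)$ is the coefficient of $\alpha^{l(E_2)}$ in $g(\alpha^{l(E_1)})$. - For the vertex of the projection gate, whose two edges carry labels $a,b$: $m_v(0,0)=1$, and $m_v(a,b)=0$ otherwise. - For the vertex of the $i$-th input qubit and for the vertex of the $i$-th output qubit of $Q'$: $m_v(x_i)=1$ and $m_v(1-x_i)=0$. *)

theory Defs
  imports Complex_Main "HOL-Library.FuncSet"
begin

text \<open>A gate consumes its input wires
 (gin, in order) and creates fresh output wires (gout, in order).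
 gmat g ys xs is the coefficient of the basis vector alpha^ys in g(alpha^xs),
 for xs of length (length (gin g)) and ys of length (length (gout g));
 this determines an arbitrary linear map A^{\<otimes>k} \<rightarrow> A^{\<otimes>l}.
 Basis label True stands for |1>, False for |0>.\<close>

record gate =
  gin  :: "nat list"
  gout :: "nat list"
  gmat :: "bool list \<Rightarrow> bool list \<Rightarrow> complex"

record opcirc =
  cin    :: "nat list"
  cgates :: "gate list"
  cout   :: "nat list"
  cans   :: nat

fun wf_gates :: "nat set \<Rightarrow> nat set \<Rightarrow> gate list \<Rightarrow> nat set \<Rightarrow> bool" where
  "wf_gates live used [] fin = (live = fin)"
| "wf_gates live used (g # gs) fin =
     (distinct (gin g) \<and> set (gin g) \<subseteq> live \<and> distinct (gout g) \<and>
      set (gout g) \<inter> used = {} \<and>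
      wf_gates (live - set (gin g) \<union> set (gout g)) (used \<union> set (gout g)) gs fin)"

definition wf_circ :: "opcirc \<Rightarrow> bool" where
  "wf_circ Q \<longleftrightarrow> distinct (cin Q) \<and> distinct (cout Q) \<and> cans Q \<in> set (cout Q) \<and>
     wf_gates (set (cin Q)) (set (cin Q)) (cgates Q) (set (cout Q))"

definition upds :: "(nat \<Rightarrow> bool) \<Rightarrow> nat list \<Rightarrow> bool list \<Rightarrow> (nat \<Rightarrow> bool)" where
  "upds f ws bs = fold (\<lambda>(w, b) h. h(w := b)) (zip ws bs) f"

text \<open>A state on a finite set S of live wires is a function psi on wire labellings;
 the coefficient of the basis vector given by the labelling l (with l w = False
 for all w outside S) is psi l.\<close>

definition apply_gate :: "gate \<Rightarrow> ((nat \<Rightarrow> bool) \<Rightarrow> complex) \<Rightarrow> ((nat \<Rightarrow> bool) \<Rightarrow> complex)" where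
  "apply_gate g psi = (\<lambda>l.
     \<Sum>xs\<in>{xs. length xs = length (gin g)}.
        gmat g (map l (gout g)) xs *
        psi (upds (upds l (gout g) (replicate (length (gout g)) False)) (gin g) xs))"

definition init_state :: "opcirc \<Rightarrow> bool list \<Rightarrow> ((nat \<Rightarrow> bool) \<Rightarrow> complex)" where
  "init_state Q x = (\<lambda>l. if l = upds (\<lambda>_. False) (cin Q) x then 1 else 0)"

text \<open>Q(x), as a state on the output wires.\<close>
definition run_circ :: "opcirc \<Rightarrow> bool list \<Rightarrow> ((nat \<Rightarrow> bool) \<Rightarrow> complex)" where
  "run_circ Q x = fold apply_gate (cgates Q) (init_state Q x)"

text \<open>The squared norm of Q(x)_0, the projection of Q(x) onto the subspace where
 the answer qubit is |0> (orthonormal basis alpha^bs).\<close>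
definition proj0_norm_sq :: "opcirc \<Rightarrow> bool list \<Rightarrow> real" where
  "proj0_norm_sq Q x =
     (\<Sum>bs\<in>{bs. length bs = length (cout Q)}.
        if upds (\<lambda>_. False) (cout Q) bs (cans Q) then 0
        else (cmod (run_circ Q x (upds (\<lambda>_. False) (cout Q) bs)))\<^sup>2)"

text \<open>A tensor circuit: vertices, edges, for each vertex the (ordered) list of the
 edges of its star, and the tensor at each vertex as a function of the labels
 of those edges.\<close>

record ('v, 'e) tcirc =
  tverts :: "'v set"
  tedges :: "'e set"
  tinc   :: "'v \<Rightarrow> 'e list"
  tten   :: "'v \<Rightarrow> bool list \<Rightarrow> complex"

definition tc_value :: "('v, 'e) tcirc \<Rightarrow> complex" where
  "tc_value T = (\<Sum>l\<in>PiE (tedges T) (\<lambda>_. UNIV).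
                    \<Prod>v\<in>tverts T. tten T v (map l (tinc T v)))"

text \<open>Vertices of the graph of Q': gate vertices (GateV False j is gate j of Q,
 GateV True j is its adjoint in the flipped copy), the projection gate,
 the input-qubit vertices and the output-qubit vertices.
 Edges (wires of Q'): (False, w) is wire w of the first copy of Q; (True, w) is
 wire w of the flipped copy. Non-answer output wires of Q are shared by both
 copies; the answer wire is split by the projection gate.\<close>

datatype tvert = GateV bool nat | ProjV | InV nat | OutV nat

definition all_wires :: "opcirc \<Rightarrow> nat set" where
  "all_wires Q = set (cin Q) \<union> (\<Union>g\<in>set (cgates Q). set (gout g))"

definition e2 :: "opcirc \<Rightarrow> nat \<Rightarrow> bool \<times> nat" where
  "e2 Q w = (if w \<in> set (cout Q) \<and> w \<noteq> cans Q then (False, w) else (True, w))"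

definition TQ :: "opcirc \<Rightarrow> bool list \<Rightarrow> (tvert, bool \<times> nat) tcirc" where
  "TQ Q x = \<lparr>
     tverts = {GateV c j | c j. j < length (cgates Q)} \<union> {ProjV}
              \<union> {InV i | i. i < length (cin Q)} \<union> {OutV i | i. i < length (cin Q)},
     tedges = (\<lambda>w. (False, w)) ` all_wires Q \<union> e2 Q ` all_wires Q,
     tinc = (\<lambda>v. case v of
         GateV False j \<Rightarrow> map (\<lambda>w. (False, w)) (gin (cgates Q ! j))
                          @ map (\<lambda>w. (False, w)) (gout (cgates Q ! j))
       | GateV True j \<Rightarrow> map (e2 Q) (gout (cgates Q ! j)) @ map (e2 Q) (gin (cgates Q ! j))
       | ProjV \<Rightarrow> [(False, cans Q), (True, cans Q)]
       | InV i \<Rightarrow> [(False, cin Q ! i)]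
       | OutV i \<Rightarrow> [e2 Q (cin Q ! i)]),
     tten = (\<lambda>v ls. case v of
         GateV False j \<Rightarrow>
           (let g = cgates Q ! j; k = length (gin g)
            in gmat g (drop k ls) (take k ls))
       | GateV True j \<Rightarrow>
           \<comment> \<open>coefficient of alpha^b in g*(alpha^a) = <alpha^b|g* alpha^a> = conj(coefficient of alpha^a in g(alpha^b))\<close>
           (let g = cgates Q ! j; k = length (gout g)
            in cnj (gmat g (take k ls) (drop k ls)))
       | ProjV \<Rightarrow> (if ls = [False, False] then 1 else 0)
       | InV i \<Rightarrow> (if ls = [x ! i] then 1 else 0)
       | OutV i \<Rightarrow> (if ls = [x ! i] then 1 else 0)) \<rparr>"

end

theory Submission
  imports Defs
begin

(*
  Expanding every gate in the computational basis writes each amplitude Q(x)_k as a path sum: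
  the sum, over all labellings of the wires of Q that agree with x on the inputs and with k on
  the outputs, of the product of the gate coefficients read off along the labelling. The tensor
  circuit of Q' multiplies such a path sum for Q with the complex conjugate of one for the
  flipped copy. The two copies share the output wires other than the answer wire, and the
  projection vertex forces the answer wire to 0 in both, so summing over the shared output
  labels k gives the sum of Q(x)_k * cnj (Q(x)_k) over all k with answer bit 0.
*)

definition labellings :: "nat set \<Rightarrow> (nat \<Rightarrow> bool) set" where
  "labellings I = {l. \<forall>w. w \<notin> I \<longrightarrow> \<not> l w}"

lemma labellings_empty [simp]: "labellings {} = {\<lambda>_. False}"
  by (auto simp: labellings_def)

lemma sum_labellings_union:
  assumes "I \<inter> J = {}"
  shows "(\<Sum>l\<in>labellings (I \<union> J). f l) =
         (\<Sum>l1\<in>labellings I. \<Sum>l2\<in>labellings J. f (override_on l2 l1 I))"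
proof -
  have "bij_betw (\<lambda>(l1, l2). override_on l2 l1 I) (labellings I \<times> labellings J) (labellings (I \<union> J))"
  proof (rule bij_betwI')
    fix p q assume "p \<in> labellings I \<times> labellings J" "q \<in> labellings I \<times> labellings J"
    then show "((case p of (l1, l2) \<Rightarrow> override_on l2 l1 I) = (case q of (l1, l2) \<Rightarrow> override_on l2 l1 I))
               = (p = q)"
      using assms by (cases p; cases q) (auto simp: labellings_def override_on_def fun_eq_iff)
  next
    fix l assume "l \<in> labellings (I \<union> J)"
    then show "\<exists>p\<in>labellings I \<times> labellings J. l = (case p of (l1, l2) \<Rightarrow> override_on l2 l1 I)"
      by (intro bexI[of _ "(\<lambda>w. w \<in> I \<and> l w, \<lambda>w. w \<in> J \<and> l w)"])
         (auto simp: labellings_def override_on_def fun_eq_iff)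
  qed (auto simp: labellings_def override_on_def)
  then show ?thesis
    by (simp add: sum.reindex_bij_betw[symmetric] sum.cartesian_product split_def)
qed

lemma sum_labellings_union_override_on:
  assumes "I \<inter> J = {}"
  shows "(\<Sum>k\<in>labellings (I \<union> J). f (override_on l k (I \<union> J))) =
         (\<Sum>m\<in>labellings I. \<Sum>m'\<in>labellings J. f (override_on (override_on l m I) m' J))"
proof -
  have "override_on l (override_on m' m I) (I \<union> J) = override_on (override_on l m I) m' J" for m m'
    using assms by (auto simp: override_on_def fun_eq_iff)
  then show ?thesis by (simp add: sum_labellings_union[OF assms])
qed

lemma sum_labellings_singleton:
  "(\<Sum>l\<in>labellings {w}. f l) = f (\<lambda>_. False) + f ((\<lambda>_. False)(w := True))"
proof -
  have "labellings {w} = {\<lambda>_. False, (\<lambda>_. False)(w := True)}"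
    by (auto simp: labellings_def fun_eq_iff)
  moreover have "(\<lambda>_. False) \<noteq> (\<lambda>_. False)(w := True)"
    by (auto simp: fun_eq_iff)
  ultimately show ?thesis by simp
qed

lemma upds_Cons: "upds f (w # ws) (b # bs) = upds (f(w := b)) ws bs"
  by (simp add: upds_def)

lemma upds_eq_iff:
  assumes "distinct ws" "length bs = length ws"
  shows "upds f ws bs = l \<longleftrightarrow> map l ws = bs \<and> (\<forall>w. w \<notin> set ws \<longrightarrow> l w = f w)"
  using assms
proof (induction ws arbitrary: bs f)
  case Nil
  then show ?case by (auto simp: upds_def)
next
  case (Cons w ws)
  then obtain b bs' where "bs = b # bs'" by (cases bs) auto
  with Cons show ?case by (auto simp: upds_Cons)
qed

lemma upds_map_eq_override_on:
  "distinct ws \<Longrightarrow> upds f ws (map l ws) = override_on f l (set ws)"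
  by (simp add: upds_eq_iff)

lemma sum_bool_lists_eq_sum_labellings:
  assumes "distinct ws"
  shows "(\<Sum>bs\<in>{bs. length bs = length ws}. h bs) = (\<Sum>l\<in>labellings (set ws). h (map l ws))"
proof -
  have inv: "map (upds (\<lambda>_. False) ws bs) ws = bs \<and> upds (\<lambda>_. False) ws bs \<in> labellings (set ws)"
    if "length bs = length ws" for bs
    using upds_eq_iff[OF assms that, of "\<lambda>_. False" "upds (\<lambda>_. False) ws bs"]
    by (simp add: labellings_def)
  show ?thesis
    by (rule sum.reindex_bij_witness[where j = "upds (\<lambda>_. False) ws" and i = "\<lambda>l. map l ws"])
       (use inv assms in \<open>auto simp: upds_eq_iff labellings_def\<close>)
qed

abbreviation reset_wires :: "nat set \<Rightarrow> (nat \<Rightarrow> bool) \<Rightarrow> nat \<Rightarrow> bool" where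
  "reset_wires C l \<equiv> override_on l (\<lambda>_. False) C"

definition created_wires :: "gate list \<Rightarrow> nat set" where
  "created_wires gs = (\<Union>g\<in>set gs. set (gout g))"

definition path_weight :: "gate list \<Rightarrow> (nat \<Rightarrow> bool) \<Rightarrow> complex" where
  "path_weight gs l = (\<Prod>g\<leftarrow>gs. gmat g (map l (gout g)) (map l (gin g)))"

lemma path_weight_cong:
  assumes "\<And>g w. g \<in> set gs \<Longrightarrow> w \<in> set (gin g) \<union> set (gout g) \<Longrightarrow> l w = l' w"
  shows "path_weight gs l = path_weight gs l'"
proof -
  have "map l (gin g) = map l' (gin g)" "map l (gout g) = map l' (gout g)" if "g \<in> set gs" for g
    using assms[OF that] by auto
  then show ?thesis
    unfolding path_weight_def by (simp cong: map_cong)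
qed

lemma path_weight_conv_nth:
  "path_weight gs l = (\<Prod>j<length gs. gmat (gs ! j) (map l (gout (gs ! j))) (map l (gin (gs ! j))))"
  unfolding path_weight_def prod.list_conv_set_nth by (simp add: atLeast0LessThan)

lemma wf_gates_created_wires_fresh:
  "wf_gates L U gs F \<Longrightarrow> L \<subseteq> U \<Longrightarrow> created_wires gs \<inter> U = {}"
  by (induction gs arbitrary: L U) (auto simp: created_wires_def)

lemma wf_gates_final_subset:
  "wf_gates L U gs F \<Longrightarrow> F \<subseteq> L \<union> created_wires gs"
  by (induction gs arbitrary: L U) (auto simp: created_wires_def)

lemma wf_gates_gin_subset:
  "wf_gates L U gs F \<Longrightarrow> g \<in> set gs \<Longrightarrow> set (gin g) \<subseteq> L \<union> created_wires gs"
  by (induction gs arbitrary: L U) (auto simp: created_wires_def)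

lemma apply_gate_eq_sum_labellings:
  assumes "distinct (gin g)" "distinct (gout g)"
  shows "apply_gate g psi l =
    (\<Sum>m\<in>labellings (set (gin g)). gmat g (map l (gout g)) (map m (gin g)) *
       psi (override_on (reset_wires (set (gout g)) l) m (set (gin g))))"
proof -
  have "replicate (length (gout g)) False = map (\<lambda>_. False) (gout g)"
    by (simp add: map_replicate_const)
  then show ?thesis
    unfolding apply_gate_def sum_bool_lists_eq_sum_labellings[OF assms(1)]
    by (simp add: upds_map_eq_override_on assms)
qed

lemma path_weight_mult_apply_gate:
  assumes "distinct (gin g)" "distinct (gout g)"
    and "set (gin g) \<inter> (set (gout g) \<union> C) = {}" "set (gout g) \<inter> C = {}"
    and "\<And>h. h \<in> set gs \<Longrightarrow> (set (gin h) \<union> set (gout h)) \<inter> set (gin g) = {}"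
  shows "path_weight gs k * apply_gate g psi (reset_wires C k) =
    (\<Sum>m\<in>labellings (set (gin g)). path_weight (g # gs) (override_on k m (set (gin g))) *
       psi (reset_wires (set (gout g) \<union> C) (override_on k m (set (gin g)))))"
proof -
  have summand:
    "path_weight gs k * (gmat g (map (reset_wires C k) (gout g)) (map m (gin g)) *
       psi (override_on (reset_wires (set (gout g)) (reset_wires C k)) m (set (gin g)))) =
     path_weight (g # gs) (override_on k m (set (gin g))) *
       psi (reset_wires (set (gout g) \<union> C) (override_on k m (set (gin g))))" for m
  proof -
    have weight: "path_weight gs (override_on k m (set (gin g))) = path_weight gs k"
      using assms(5) by (intro path_weight_cong override_on_apply_notin) blast
    have outputs: "map (override_on k m (set (gin g))) (gout g) = map (reset_wires C k) (gout g)"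
      using assms(3,4) by (auto simp: override_on_def)
    have inputs: "map (override_on k m (set (gin g))) (gin g) = map m (gin g)"
      by simp
    have cleared: "reset_wires (set (gout g) \<union> C) (override_on k m (set (gin g))) =
        override_on (reset_wires (set (gout g)) (reset_wires C k)) m (set (gin g))"
      using assms(3) by (auto simp: override_on_def fun_eq_iff)
    have "path_weight (g # gs) (override_on k m (set (gin g))) =
        gmat g (map (override_on k m (set (gin g))) (gout g)) (map (override_on k m (set (gin g))) (gin g)) *
        path_weight gs (override_on k m (set (gin g)))"
      by (simp add: path_weight_def)
    then show ?thesis
      unfolding weight outputs inputs cleared by (simp only: ac_simps)
  qed
  show ?thesis
    by (simp add: apply_gate_eq_sum_labellings assms(1,2) sum_distrib_left summand)
qed

(* apply_gate reads the previous state with the gate's output wires reset to 0, so in the end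
   the initial state is read with all created wires reset. *)
lemma fold_apply_gate_eq_path_sum:
  assumes "wf_gates L U gs F" "L \<subseteq> U"
  shows "fold apply_gate gs psi l =
    (\<Sum>m\<in>labellings (L \<union> created_wires gs - F).
       path_weight gs (override_on l m (L \<union> created_wires gs - F)) *
       psi (reset_wires (created_wires gs) (override_on l m (L \<union> created_wires gs - F))))"
  using assms
proof (induction gs arbitrary: L U psi)
  case Nil
  then show ?case by (simp add: created_wires_def path_weight_def)
next
  case (Cons g gs)
  define Gi Go C' where "Gi = set (gin g)" and "Go = set (gout g)" and "C' = created_wires gs"
  define L' where "L' = L - Gi \<union> Go"
  define I' where "I' = L' \<union> C' - F"
  have wf: "wf_gates L' (U \<union> Go) gs F" and L'U: "L' \<subseteq> U \<union> Go"
    and dist: "distinct (gin g)" "distinct (gout g)" and GiL: "Gi \<subseteq> L" and GoU: "Go \<inter> U = {}"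
    using Cons.prems by (auto simp: L'_def Gi_def Go_def)
  have C'_fresh: "C' \<inter> (U \<union> Go) = {}"
    unfolding C'_def by (rule wf_gates_created_wires_fresh[OF wf L'U])
  have F_sub: "F \<subseteq> L' \<union> C'"
    unfolding C'_def by (rule wf_gates_final_subset[OF wf])
  have Gi_disj: "Gi \<inter> (Go \<union> C') = {}" "Gi \<inter> L' = {}"
    using GiL GoU C'_fresh Cons.prems(2) by (auto simp: L'_def)
  have gs_avoid_Gi: "(set (gin h) \<union> set (gout h)) \<inter> Gi = {}" if "h \<in> set gs" for h
    using wf_gates_gin_subset[OF wf that] that Gi_disj by (auto simp: C'_def created_wires_def)
  have C_eq: "created_wires (g # gs) = Go \<union> C'"
    by (simp add: C'_def Go_def created_wires_def)
  have I_split: "L \<union> (Go \<union> C') - F = I' \<union> Gi" "I' \<inter> Gi = {}"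
    using GiL Gi_disj F_sub by (auto simp: I'_def L'_def)
  have "fold apply_gate (g # gs) psi l = fold apply_gate gs (apply_gate g psi) l"
    by simp
  also have "\<dots> = (\<Sum>m\<in>labellings I'. path_weight gs (override_on l m I') *
      apply_gate g psi (reset_wires C' (override_on l m I')))"
    using Cons.IH[OF wf L'U] by (simp add: I'_def C'_def)
  also have "\<dots> = (\<Sum>m\<in>labellings I'. \<Sum>m1\<in>labellings Gi.
      path_weight (g # gs) (override_on (override_on l m I') m1 Gi) *
      psi (reset_wires (Go \<union> C') (override_on (override_on l m I') m1 Gi)))"
    using gs_avoid_Gi Gi_disj C'_fresh
    by (subst path_weight_mult_apply_gate) (auto simp: dist Gi_def Go_def)
  also have "\<dots> = (\<Sum>k\<in>labellings (I' \<union> Gi). path_weight (g # gs) (override_on l k (I' \<union> Gi)) *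
      psi (reset_wires (Go \<union> C') (override_on l k (I' \<union> Gi))))"
    by (rule sum_labellings_union_override_on[OF I_split(2), symmetric])
  finally show ?case
    unfolding C_eq I_split(1) .
qed

lemma all_wires_eq: "all_wires Q = set (cin Q) \<union> created_wires (cgates Q)"
  by (simp add: all_wires_def created_wires_def)

lemma wf_circ_cin_created_disjoint:
  "wf_circ Q \<Longrightarrow> set (cin Q) \<inter> created_wires (cgates Q) = {}"
  using wf_gates_created_wires_fresh[of "set (cin Q)" "set (cin Q)"] by (auto simp: wf_circ_def)

lemma wf_circ_cout_subset: "wf_circ Q \<Longrightarrow> set (cout Q) \<subseteq> all_wires Q"
  using wf_gates_final_subset[of "set (cin Q)" "set (cin Q)" "cgates Q" "set (cout Q)"]
  by (auto simp: wf_circ_def all_wires_eq)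

lemma wf_circ_gate_wires:
  "wf_circ Q \<Longrightarrow> g \<in> set (cgates Q) \<Longrightarrow> set (gin g) \<union> set (gout g) \<subseteq> all_wires Q"
  using wf_gates_gin_subset by (fastforce simp: wf_circ_def all_wires_def created_wires_def)

definition inner_wires :: "opcirc \<Rightarrow> nat set" where
  "inner_wires Q = all_wires Q - set (cout Q)"

definition path_amplitude :: "opcirc \<Rightarrow> bool list \<Rightarrow> (nat \<Rightarrow> bool) \<Rightarrow> complex" where
  "path_amplitude Q x l = path_weight (cgates Q) l * of_bool (map l (cin Q) = x)"

lemma run_circ_eq_sum_path_amplitude:
  assumes "wf_circ Q" "length x = length (cin Q)" "l \<in> labellings (set (cout Q))"
  shows "run_circ Q x l = (\<Sum>m\<in>labellings (inner_wires Q). path_amplitude Q x (override_on l m (inner_wires Q)))"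
proof -
  let ?C = "created_wires (cgates Q)"
  have init: "init_state Q x (reset_wires ?C (override_on l m (inner_wires Q))) =
      of_bool (map (override_on l m (inner_wires Q)) (cin Q) = x)" for m
  proof -
    let ?k = "override_on l m (inner_wires Q)"
    have "map (reset_wires ?C ?k) (cin Q) = map ?k (cin Q)"
      using wf_circ_cin_created_disjoint[OF assms(1)]
      by (intro map_cong refl override_on_apply_notin) blast
    moreover have "\<not> reset_wires ?C ?k w" if "w \<notin> set (cin Q)" for w
      using that assms(3) wf_circ_cout_subset[OF assms(1)]
      by (auto simp: override_on_def inner_wires_def all_wires_eq labellings_def)
    ultimately have "upds (\<lambda>_. False) (cin Q) x = reset_wires ?C ?k \<longleftrightarrow> map ?k (cin Q) = x"
      using assms(1,2) by (auto simp: upds_eq_iff wf_circ_def)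
    then show ?thesis
      by (auto simp: init_state_def)
  qed
  have "run_circ Q x l = (\<Sum>m\<in>labellings (inner_wires Q).
      path_weight (cgates Q) (override_on l m (inner_wires Q)) *
      init_state Q x (reset_wires ?C (override_on l m (inner_wires Q))))"
    using assms(1) unfolding run_circ_def
    by (subst fold_apply_gate_eq_path_sum[of "set (cin Q)" "set (cin Q)" _ "set (cout Q)"])
       (auto simp: wf_circ_def inner_wires_def all_wires_eq)
  then show ?thesis
    by (simp add: path_amplitude_def init)
qed

lemma proj0_norm_sq_eq_sum_labellings:
  assumes "distinct (cout Q)"
  shows "proj0_norm_sq Q x =
    (\<Sum>l\<in>labellings (set (cout Q)). of_bool (\<not> l (cans Q)) * (cmod (run_circ Q x l))\<^sup>2)"
proof -
  have "upds (\<lambda>_. False) (cout Q) (map l (cout Q)) = l" if "l \<in> labellings (set (cout Q))" for l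
    using that assms by (auto simp: upds_eq_iff labellings_def)
  then show ?thesis
    unfolding proj0_norm_sq_def sum_bool_lists_eq_sum_labellings[OF assms]
    by (intro sum.cong) auto
qed

lemma prod_of_bool:
  "finite A \<Longrightarrow> (\<Prod>i\<in>A. of_bool (P i) :: 'a :: comm_semiring_1) = of_bool (\<forall>i\<in>A. P i)"
  by (induction A rule: finite_induct) auto

lemma sum_PiE_Pair_eq_sum_labellings:
  fixes A B :: "nat set" and f :: "(bool \<times> nat \<Rightarrow> bool) \<Rightarrow> 'a :: comm_monoid_add"
  defines "E \<equiv> Pair False ` A \<union> Pair True ` B"
  shows "(\<Sum>e\<in>PiE E (\<lambda>_. UNIV). f e) =
    (\<Sum>l\<in>labellings A. \<Sum>l'\<in>labellings B. f (restrict (\<lambda>(b, w). if b then l' w else l w) E))"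
proof -
  let ?i = "\<lambda>(l, l'). restrict (\<lambda>(b, w). if b then l' w else l w) E"
  let ?j = "\<lambda>e. (\<lambda>w. w \<in> A \<and> e (False, w), \<lambda>w. w \<in> B \<and> e (True, w))"
  have ij: "?i (?j e) = e" if "e \<in> PiE E (\<lambda>_. UNIV)" for e
  proof
    fix q :: "bool \<times> nat"
    show "?i (?j e) q = e q"
    proof (cases "q \<in> E")
      case True
      then show ?thesis by (auto simp: E_def)
    next
      case False
      then show ?thesis using PiE_arb[OF that False] by simp
    qed
  qed
  have ji: "?j (?i p) = p" if "p \<in> labellings A \<times> labellings B" for p
    using that by (auto simp: E_def labellings_def fun_eq_iff split: prod.splits)
  have "(\<Sum>e\<in>PiE E (\<lambda>_. UNIV). f e) = (\<Sum>p\<in>labellings A \<times> labellings B. f (?i p))"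
  proof (rule sum.reindex_bij_witness[where i = ?i and j = ?j])
    fix e :: "bool \<times> nat \<Rightarrow> bool" assume "e \<in> PiE E (\<lambda>_. UNIV)"
    then show "?i (?j e) = e" "?j e \<in> labellings A \<times> labellings B" "f (?i (?j e)) = f e"
      using ij by (simp_all add: labellings_def)
  next
    fix p assume "p \<in> labellings A \<times> labellings B"
    then show "?j (?i p) = p" "?i p \<in> PiE E (\<lambda>_. UNIV)"
      using ji by (auto split: prod.splits)
  qed
  then show ?thesis
    by (simp add: sum.cartesian_product case_prod_unfold)
qed

lemma tedges_TQ:
  assumes "wf_circ Q"
  shows "tedges (TQ Q x) = Pair False ` all_wires Q \<union> Pair True ` insert (cans Q) (inner_wires Q)"
proof -
  let ?F = "set (cout Q) - {cans Q}"
  have "?F \<subseteq> all_wires Q" "all_wires Q - ?F = insert (cans Q) (inner_wires Q)"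
    using assms wf_circ_cout_subset by (auto simp: wf_circ_def inner_wires_def)
  moreover have "e2 Q ` all_wires Q = Pair False ` (all_wires Q \<inter> ?F) \<union> Pair True ` (all_wires Q - ?F)"
    unfolding e2_def by auto
  moreover have "tedges (TQ Q x) = Pair False ` all_wires Q \<union> e2 Q ` all_wires Q"
    by (simp add: TQ_def)
  ultimately show ?thesis
    by (simp add: Int_absorb1) blast
qed

lemma prod_tverts_TQ:
  "(\<Prod>v\<in>tverts (TQ Q x). f v) =
    (\<Prod>j<length (cgates Q). f (GateV False j)) * (\<Prod>j<length (cgates Q). f (GateV True j)) * f ProjV *
    (\<Prod>i<length (cin Q). f (InV i)) * (\<Prod>i<length (cin Q). f (OutV i))"
proof -
  let ?G = "GateV False ` {..<length (cgates Q)}" and ?G' = "GateV True ` {..<length (cgates Q)}"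
    and ?In = "InV ` {..<length (cin Q)}" and ?Out = "OutV ` {..<length (cin Q)}"
  have "{GateV c j | c j. j < length (cgates Q)} = ?G \<union> ?G'"
    by auto
  then have "tverts (TQ Q x) = ?G \<union> ?G' \<union> {ProjV} \<union> ?In \<union> ?Out"
    by (auto simp: TQ_def)
  moreover have "?G \<inter> ?G' = {}" "(?G \<union> ?G') \<inter> {ProjV} = {}" "(?G \<union> ?G' \<union> {ProjV}) \<inter> ?In = {}"
    "(?G \<union> ?G' \<union> {ProjV} \<union> ?In) \<inter> ?Out = {}"
    by auto
  ultimately have "prod f (tverts (TQ Q x)) = prod f ?G * prod f ?G' * prod f {ProjV} * prod f ?In * prod f ?Out"
    by (simp only: prod.union_disjoint finite_Un finite_imageI finite_lessThan finite.intros simp_thms)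
  then show ?thesis
    by (simp add: prod.reindex inj_on_def)
qed

lemma prod_tten_TQ:
  assumes "wf_circ Q" "length x = length (cin Q)"
    and first: "\<And>w. w \<in> all_wires Q \<Longrightarrow> e (False, w) = l w"
    and flipped: "\<And>w. w \<in> all_wires Q \<Longrightarrow> e (e2 Q w) = l' w"
  shows "(\<Prod>v\<in>tverts (TQ Q x). tten (TQ Q x) v (map e (tinc (TQ Q x) v))) =
    path_amplitude Q x l * cnj (path_amplitude Q x l') * of_bool (\<not> l (cans Q) \<and> \<not> l' (cans Q))"
proof -
  define gs n where "gs = cgates Q" and "n = length (cin Q)"
  let ?f = "\<lambda>v. tten (TQ Q x) v (map e (tinc (TQ Q x) v))"
  have gate_wires: "set (gin (gs ! j)) \<subseteq> all_wires Q" "set (gout (gs ! j)) \<subseteq> all_wires Q"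
    if "j < length gs" for j
    using wf_circ_gate_wires[OF assms(1), of "gs ! j"] that by (auto simp: gs_def)
  have in_wire: "cin Q ! i \<in> all_wires Q" if "i < n" for i
    using that by (simp add: all_wires_def n_def)
  have ans_wire: "cans Q \<in> all_wires Q" "e2 Q (cans Q) = (True, cans Q)"
    using assms(1) wf_circ_cout_subset by (auto simp: wf_circ_def e2_def)
  have gate_tensor: "?f (GateV False j) = gmat (gs ! j) (map l (gout (gs ! j))) (map l (gin (gs ! j)))"
    if "j < length gs" for j
    using gate_wires[OF that] first by (simp add: TQ_def Let_def gs_def subset_iff cong: map_cong)
  have adjoint_tensor: "?f (GateV True j) = cnj (gmat (gs ! j) (map l' (gout (gs ! j))) (map l' (gin (gs ! j))))"
    if "j < length gs" for j
    using gate_wires[OF that] flipped by (simp add: TQ_def Let_def gs_def subset_iff cong: map_cong)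
  have proj_tensor: "?f ProjV = of_bool (\<not> l (cans Q) \<and> \<not> l' (cans Q))"
    using ans_wire first flipped[of "cans Q"] by (simp add: TQ_def)
  have input_tensor: "?f (InV i) = of_bool (l (cin Q ! i) = x ! i)" if "i < n" for i
    using in_wire[OF that] first by (simp add: TQ_def)
  have output_tensor: "?f (OutV i) = of_bool (l' (cin Q ! i) = x ! i)" if "i < n" for i
    using in_wire[OF that] flipped by (simp add: TQ_def)
  have inputs_match: "(\<Prod>i<n. of_bool (k (cin Q ! i) = x ! i)) = (of_bool (map k (cin Q) = x) :: complex)" for k
    using assms(2) by (auto simp: prod_of_bool list_eq_iff_nth_eq n_def)
  have "(\<Prod>v\<in>tverts (TQ Q x). ?f v) = (\<Prod>j<length gs. ?f (GateV False j)) *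
      (\<Prod>j<length gs. ?f (GateV True j)) * ?f ProjV * (\<Prod>i<n. ?f (InV i)) * (\<Prod>i<n. ?f (OutV i))"
    unfolding gs_def n_def by (rule prod_tverts_TQ)
  also have "\<dots> = path_weight gs l * cnj (path_weight gs l') * of_bool (\<not> l (cans Q) \<and> \<not> l' (cans Q)) *
      of_bool (map l (cin Q) = x) * of_bool (map l' (cin Q) = x)"
    by (simp add: gate_tensor adjoint_tensor proj_tensor input_tensor output_tensor
        path_weight_conv_nth flip: inputs_match)
  finally show ?thesis
    by (simp add: path_amplitude_def gs_def ac_simps)
qed

(* l labels the wires of Q and l' the remaining wires of the flipped copy; on the output wires
   other than the answer wire the flipped copy reads the labels of l. *)
lemma tc_value_TQ_eq_sum_labellings:
  assumes "wf_circ Q" "length x = length (cin Q)"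
  shows "tc_value (TQ Q x) =
    (\<Sum>l\<in>labellings (all_wires Q). \<Sum>l'\<in>labellings (insert (cans Q) (inner_wires Q)).
       path_amplitude Q x l * cnj (path_amplitude Q x (override_on l' l (set (cout Q) - {cans Q}))) *
       of_bool (\<not> l (cans Q) \<and> \<not> l' (cans Q)))"
  unfolding tc_value_def tedges_TQ[OF assms(1)] sum_PiE_Pair_eq_sum_labellings
proof (intro sum.cong refl)
  fix l l' :: "nat \<Rightarrow> bool"
  let ?e = "restrict (\<lambda>(b, w). if b then l' w else l w)
    (Pair False ` all_wires Q \<union> Pair True ` insert (cans Q) (inner_wires Q))"
  have "?e (False, w) = l w" if "w \<in> all_wires Q" for w
    using that by simp
  moreover have "?e (e2 Q w) = override_on l' l (set (cout Q) - {cans Q}) w" if "w \<in> all_wires Q" for w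
    using that by (auto simp: e2_def inner_wires_def)
  ultimately show "(\<Prod>v\<in>tverts (TQ Q x). tten (TQ Q x) v (map ?e (tinc (TQ Q x) v))) =
      path_amplitude Q x l * cnj (path_amplitude Q x (override_on l' l (set (cout Q) - {cans Q}))) *
      of_bool (\<not> l (cans Q) \<and> \<not> l' (cans Q))"
    by (simp add: prod_tten_TQ[OF assms])
qed

(* The second label of the answer wire must be 0, so both copies see the same output labelling k,
   and their inner wires are summed out independently. *)
lemma sum_labellings_mirror_contraction:
  fixes A :: "(nat \<Rightarrow> bool) \<Rightarrow> complex"
  assumes "I \<inter> F = {}" "a \<in> F"
  shows "(\<Sum>l\<in>labellings (I \<union> F). \<Sum>l'\<in>labellings (insert a I).
           A l * cnj (A (override_on l' l (F - {a}))) * of_bool (\<not> l a \<and> \<not> l' a)) =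
         (\<Sum>k\<in>labellings F. of_bool (\<not> k a) *
           (\<Sum>m\<in>labellings I. A (override_on k m I)) * cnj (\<Sum>m\<in>labellings I. A (override_on k m I)))"
proof -
  have aI: "a \<notin> I" "insert a I = I \<union> {a}" "I \<inter> {a} = {}"
    using assms by auto
  have inner: "(\<Sum>l'\<in>labellings (insert a I). A (override_on k m I) *
        cnj (A (override_on l' (override_on k m I) (F - {a}))) * of_bool (\<not> override_on k m I a \<and> \<not> l' a)) =
      (\<Sum>m'\<in>labellings I. of_bool (\<not> k a) * A (override_on k m I) * cnj (A (override_on k m' I)))"
    if k: "k \<in> labellings F" for k m
  proof -
    have "override_on (override_on (\<lambda>_. False) m' I) (override_on k m I) (F - {a}) = override_on k m' I"
      if "\<not> k a" for m'
      using assms k that by (auto simp: override_on_def labellings_def fun_eq_iff)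
    then show ?thesis
      unfolding aI(2) sum_labellings_union[OF aI(3)] sum_labellings_singleton
      using aI(1) by simp
  qed
  have "(\<Sum>l\<in>labellings (I \<union> F). \<Sum>l'\<in>labellings (insert a I).
           A l * cnj (A (override_on l' l (F - {a}))) * of_bool (\<not> l a \<and> \<not> l' a)) =
      (\<Sum>m\<in>labellings I. \<Sum>k\<in>labellings F. \<Sum>m'\<in>labellings I.
           of_bool (\<not> k a) * A (override_on k m I) * cnj (A (override_on k m' I)))"
    unfolding sum_labellings_union[OF assms(1)] by (intro inner sum.cong refl)
  also have "\<dots> = (\<Sum>k\<in>labellings F. \<Sum>m\<in>labellings I. \<Sum>m'\<in>labellings I.
           of_bool (\<not> k a) * A (override_on k m I) * cnj (A (override_on k m' I)))"
    by (rule sum.swap)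
  finally show ?thesis
    by (simp add: sum_distrib_left[symmetric] sum_distrib_right[symmetric] mult.assoc)
qed

theorem lemma4:
  fixes Q :: opcirc and x :: "bool list"
  assumes "wf_circ Q" and "length x = length (cin Q)"
  shows "tc_value (TQ Q x) = complex_of_real (proj0_norm_sq Q x)"
proof -
  let ?I = "inner_wires Q" and ?F = "set (cout Q)" and ?a = "cans Q"
  have wires: "all_wires Q = ?I \<union> ?F" "?I \<inter> ?F = {}" and "?a \<in> ?F" "distinct (cout Q)"
    using assms(1) wf_circ_cout_subset by (auto simp: inner_wires_def wf_circ_def)
  have "tc_value (TQ Q x) = (\<Sum>k\<in>labellings ?F. of_bool (\<not> k ?a) *
      (\<Sum>m\<in>labellings ?I. path_amplitude Q x (override_on k m ?I)) *
      cnj (\<Sum>m\<in>labellings ?I. path_amplitude Q x (override_on k m ?I)))"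
    unfolding tc_value_TQ_eq_sum_labellings[OF assms] wires(1)
    by (rule sum_labellings_mirror_contraction[OF wires(2) \<open>?a \<in> ?F\<close>])
  also have "\<dots> = (\<Sum>k\<in>labellings ?F. of_bool (\<not> k ?a) * run_circ Q x k * cnj (run_circ Q x k))"
    using assms by (simp add: run_circ_eq_sum_path_amplitude)
  also have "\<dots> = complex_of_real (proj0_norm_sq Q x)"
    unfolding proj0_norm_sq_eq_sum_labellings[OF \<open>distinct (cout Q)\<close>] of_real_sum
    by (intro sum.cong refl) (simp add: mult.assoc flip: complex_norm_square)
  finally show ?thesis .
qed

end
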